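(* Let $n\ge1$, $\gamma\ge0$, let $A$ be a disk in $\mathbb{R}^2$ of radius $n^\gamma$, and let $z>0$ with $z\le n^\gamma$. Let $Q$ be a convex cell of a partition of $A$ into convex cells each of diameter at most $z$. Let $s,d$ be independent uniformly distributed points in $A$. Then the probability that the line segment from $s$ to $d$ intersects $Q$ is at most $6\,\frac{z}{n^\gamma}$. *)

theory Defs
  imports "HOL-Analysis.Analysis"
begin

definition unif_pair :: "(real^2) set \<Rightarrow> ((real^2) \<times> (real^2)) measure" where
  "unif_pair A = uniform_measure lborel A \<Otimes>\<^sub>M uniform_measure lborel A"

end

theory Submission
  imports Defs "HOL-Probability.Probability"
begin

text \<open>
  Since \<open>Q\<close> has diameter at most \<open>z\<close>, it lies in a disk \<open>cball q z\<close>, so a segment \<open>[s, d]\<close>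
  meeting \<open>Q\<close> has a point within \<open>z\<close> of \<open>q\<close>, in its second half or (swapping \<open>s\<close> and \<open>d\<close>)
  in its first half. In the first case, seen from \<open>s\<close>, the endpoint \<open>d\<close> is at most twice as far
  out as that point, so \<open>d\<close> lies in a rectangle of length \<open>2R + 2z\<close> in the direction of
  \<open>q - s\<close> and width \<open>4z\<close>, where \<open>R = n powr \<gamma>\<close> is the radius of \<open>A\<close>. For every \<open>s\<close> this has
  probability at most \<open>(2R + 2z) 4z / (\<pi> R\<^sup>2)\<close>, and integrating over \<open>s\<close> and adding the
  symmetric case gives \<open>8z (2R + 2z) / (\<pi> R\<^sup>2) \<le> 6z / R\<close> when \<open>6z \<le> R\<close>; otherwise the
  bound exceeds \<open>1\<close>.
\<close>

definition perp :: "real^2 \<Rightarrow> real^2" where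
  "perp u = vector [- u$2, u$1]"

lemma inner_perp_self [simp]: "u \<bullet> perp u = 0"
  by (simp add: perp_def inner_vec_def sum_2 algebra_simps)

lemma inner_perp_perp [simp]: "perp u \<bullet> perp v = u \<bullet> v"
  by (simp add: perp_def inner_vec_def sum_2 algebra_simps)

lemma unit_vector_decompose:
  assumes "norm u = 1"
  shows "(v \<bullet> u) *\<^sub>R u + (v \<bullet> perp u) *\<^sub>R perp u = v"
proof -
  have "(v \<bullet> u) *\<^sub>R u + (v \<bullet> perp u) *\<^sub>R perp u = (u \<bullet> u) *\<^sub>R v"
    by (simp add: perp_def inner_vec_def sum_2 vec_eq_iff forall_2 algebra_simps)
  then show ?thesis
    using assms by (simp add: norm_eq_1)
qed

definition frame :: "real^2 \<Rightarrow> real^2 \<Rightarrow> real^2" where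
  "frame u y = y$1 *\<^sub>R u + y$2 *\<^sub>R perp u"

lemma linear_frame: "linear (frame u)"
  by (intro linearI) (simp_all add: frame_def algebra_simps)

lemma inner_frame:
  assumes "norm u = 1"
  shows "frame u y \<bullet> u = y$1" and "frame u y \<bullet> perp u = y$2"
  using assms by (simp_all add: frame_def inner_add_left norm_eq_1 inner_commute[of "perp u" u])

lemma orthogonal_transformation_frame:
  assumes "norm u = 1"
  shows "orthogonal_transformation (frame u)"
proof -
  have "frame u v \<bullet> frame u w = v$1 * w$1 + v$2 * w$2" for v w
    using assms
    by (simp add: frame_def inner_add_left inner_add_right norm_eq_1 inner_commute[of "perp u" u])
  then have "frame u v \<bullet> frame u w = v \<bullet> w" for v w
    by (simp add: inner_vec_def sum_2)
  then show ?thesis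
    by (simp add: orthogonal_transformation_def linear_frame)
qed

definition oriented_box :: "real^2 \<Rightarrow> real^2 \<Rightarrow> real \<Rightarrow> real \<Rightarrow> real \<Rightarrow> (real^2) set" where
  "oriented_box s u a b h = {d. a \<le> (d - s) \<bullet> u \<and> (d - s) \<bullet> u \<le> b \<and> \<bar>(d - s) \<bullet> perp u\<bar> \<le> h}"

lemma oriented_box_eq_image:
  assumes "norm u = 1"
  shows "oriented_box s u a b h = (+) s ` frame u ` cbox (vector [a, -h]) (vector [b, h])"
proof (intro set_eqI iffI)
  fix d assume d: "d \<in> oriented_box s u a b h"
  let ?y = "vector [(d - s) \<bullet> u, (d - s) \<bullet> perp u] :: real^2"
  have "d = s + frame u ?y"
    using unit_vector_decompose[OF assms, of "d - s"] by (simp add: frame_def)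
  moreover have "?y \<in> cbox (vector [a, -h]) (vector [b, h])"
    using d by (simp add: oriented_box_def mem_box_cart forall_2 abs_le_iff)
  ultimately show "d \<in> (+) s ` frame u ` cbox (vector [a, -h]) (vector [b, h])"
    by blast
next
  fix d assume "d \<in> (+) s ` frame u ` cbox (vector [a, -h]) (vector [b, h])"
  then obtain y where y: "y \<in> cbox (vector [a, -h]) (vector [b, h])" and "d - s = frame u y"
    by auto
  then have "(d - s) \<bullet> u = y$1" and "(d - s) \<bullet> perp u = y$2"
    using assms by (simp_all add: inner_frame)
  with y show "d \<in> oriented_box s u a b h"
    by (simp add: oriented_box_def mem_box_cart forall_2 abs_le_iff)
qed

lemma
  assumes "norm u = 1" and "a \<le> b" and "0 \<le> h"
  shows sets_oriented_box: "oriented_box s u a b h \<in> sets lborel"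
    and emeasure_oriented_box: "emeasure lborel (oriented_box s u a b h) = ennreal ((b - a) * (2 * h))"
proof -
  let ?B = "cbox (vector [a, -h]) (vector [b, h]) :: (real^2) set"
  have compact: "compact (oriented_box s u a b h)"
    unfolding oriented_box_eq_image[OF assms(1)] image_image
    using linear_continuous_on[OF linear_linear[THEN iffD2, OF linear_frame]]
    by (intro compact_continuous_image continuous_intros) auto
  then show borel: "oriented_box s u a b h \<in> sets lborel"
    by (simp add: compact_imp_closed)
  have "vector [a, -h] \<in> ?B"
    using assms by (simp add: mem_box_cart forall_2)
  then have "?B \<noteq> {}"
    by blast
  then have "measure lebesgue ?B = (b - a) * (2 * h)"
    by (simp add: content_cbox_cart UNIV_2)
  then have "measure lebesgue (oriented_box s u a b h) = (b - a) * (2 * h)"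
    by (simp add: oriented_box_eq_image[OF assms(1)] measure_translation
        measure_orthogonal_image[OF orthogonal_transformation_frame[OF assms(1)]])
  moreover have "emeasure lebesgue (oriented_box s u a b h) = measure lebesgue (oriented_box s u a b h)"
    using compact by (intro emeasure_eq_measure2 lmeasurable_compact)
  ultimately show "emeasure lborel (oriented_box s u a b h) = ennreal ((b - a) * (2 * h))"
    using borel by simp
qed

lemma emeasure_lborel_cball_cart2:
  fixes c :: "real^2"
  assumes "0 \<le> R"
  shows "emeasure lborel (cball c R) = ennreal (pi * R^2)"
  using emeasure_cball[OF assms, of c] by (simp add: unit_ball_vol_2 mult.commute)

lemma obtain_unit_direction:
  fixes v :: "'a::euclidean_space"
  obtains u where "norm u = 1" and "v = norm v *\<^sub>R u"
proof (cases "v = 0")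
  case True
  obtain u :: 'a where "norm u = 1"
    using vector_choose_size[of 1] by auto
  with True that show ?thesis
    by simp
next
  case False
  then show ?thesis
    using that[of "sgn v"] by (simp add: norm_sgn sgn_div_norm)
qed

lemma inner_displacement_near_second_half:
  fixes s d q v :: "'a::real_inner"
  assumes near: "dist q ((1 - t) *\<^sub>R s + t *\<^sub>R d) \<le> z"
    and t: "1/2 \<le> t" "t \<le> 1" and v: "norm v = 1"
  shows "\<bar>(d - s) \<bullet> v - (q - s) \<bullet> v / t\<bar> \<le> 2 * z"
proof -
  define w where "w = (1 - t) *\<^sub>R s + t *\<^sub>R d - q"
  have "t > 0"
    using t by simp
  then have "d - s = (1 / t) *\<^sub>R ((q - s) + w)"
    by (simp add: w_def algebra_simps)
  then have eq: "(d - s) \<bullet> v - (q - s) \<bullet> v / t = (w \<bullet> v) * (1 / t)"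
    by (simp add: inner_add_left add_divide_distrib)
  have "\<bar>w \<bullet> v\<bar> \<le> z"
    using Cauchy_Schwarz_ineq2[of w v] near v by (simp add: w_def dist_norm norm_minus_commute)
  moreover have "1 / t \<le> 2"
    using t by (simp add: field_simps)
  ultimately have "\<bar>w \<bullet> v\<bar> * (1 / t) \<le> z * 2"
    using \<open>t > 0\<close> by (intro mult_mono) auto
  then show ?thesis
    using \<open>t > 0\<close> by (simp add: eq abs_mult)
qed

text \<open>
  Only an approach to \<open>q\<close> in the second half of the segment confines \<open>d\<close> to a thin box as seen
  from \<open>s\<close>; the first half is covered by swapping \<open>s\<close> and \<open>d\<close>.
\<close>
definition late_approach :: "'a::real_normed_vector \<Rightarrow> real \<Rightarrow> 'a \<Rightarrow> real \<Rightarrow> ('a \<times> 'a) set" where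
  "late_approach c R q z = {(s, d). s \<in> cball c R \<and> d \<in> cball c R \<and>
      (\<exists>t\<in>{1/2..1}. dist q ((1 - t) *\<^sub>R s + t *\<^sub>R d) \<le> z)}"

lemma compact_late_approach:
  fixes c q :: "'a::euclidean_space"
  shows "compact (late_approach c R q z)"
proof -
  define S where "S = ((cball c R \<times> cball c R) \<times> {1/2..1::real}) \<inter>
     {((s, d), t). dist q ((1 - t) *\<^sub>R s + t *\<^sub>R d) \<le> z}"
  have "closed {((s, d), t). dist q ((1 - t) *\<^sub>R s + t *\<^sub>R d) \<le> z}"
    unfolding case_prod_beta by (intro closed_Collect_le continuous_intros)
  then have "compact S"
    unfolding S_def by (intro compact_Int_closed compact_Times compact_cball) auto
  moreover have "late_approach c R q z = fst ` S"
    by (force simp: late_approach_def S_def image_iff)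
  ultimately show ?thesis
    by (simp add: compact_continuous_image continuous_on_fst)
qed

lemma late_approach_section_subset:
  fixes c q s u :: "real^2"
  assumes s: "s \<in> cball c R" and u: "norm u = 1" "q - s = norm (q - s) *\<^sub>R u"
  shows "Pair s -` late_approach c R q z \<subseteq> oriented_box s u (-2 * z) (2 * R) (2 * z)"
proof
  fix d assume "d \<in> Pair s -` late_approach c R q z"
  then obtain t where d: "d \<in> cball c R" and t: "1/2 \<le> t" "t \<le> 1"
    and near: "dist q ((1 - t) *\<^sub>R s + t *\<^sub>R d) \<le> z"
    by (auto simp: late_approach_def)
  have "(q - s) \<bullet> v = norm (q - s) * (u \<bullet> v)" for v
    using u(2) by (metis inner_scaleR_left)
  then have "(q - s) \<bullet> u = norm (q - s)" and "(q - s) \<bullet> perp u = 0"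
    using u(1) by (simp_all add: norm_eq_1)
  moreover have "norm (perp u) = 1"
    using u by (simp add: norm_eq_1)
  ultimately have along: "(d - s) \<bullet> u \<ge> norm (q - s) / t - 2 * z"
    and across: "\<bar>(d - s) \<bullet> perp u\<bar> \<le> 2 * z"
    using inner_displacement_near_second_half[OF near t, of u]
      inner_displacement_near_second_half[OF near t, of "perp u"] u by auto
  have "(d - s) \<bullet> u \<le> norm (d - s)"
    using Cauchy_Schwarz_ineq2[of "d - s" u] u by simp
  also have "\<dots> \<le> 2 * R"
    using s d dist_triangle[of s d c] by (simp add: dist_norm norm_minus_commute dist_commute)
  finally have "(d - s) \<bullet> u \<le> 2 * R" .
  moreover have "norm (q - s) / t \<ge> 0"
    using t by simp
  ultimately show "d \<in> oriented_box s u (-2 * z) (2 * R) (2 * z)"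
    using along across by (simp add: oriented_box_def)
qed

lemma emeasure_uniform_measure_le:
  assumes "A \<in> sets M" and "S \<in> sets M"
  shows "emeasure (uniform_measure M A) S \<le> emeasure M S / emeasure M A"
  using assms by (simp add: divide_right_mono_ennreal emeasure_mono)

lemma emeasure_late_approach_section:
  fixes c q s :: "real^2"
  assumes "R > 0" and "z \<ge> 0"
  shows "emeasure (uniform_measure lborel (cball c R)) (Pair s -` late_approach c R q z)
           \<le> ennreal ((2 * R + 2 * z) * (4 * z) / (pi * R^2))"
proof (cases "s \<in> cball c R")
  case False
  then have "Pair s -` late_approach c R q z = {}"
    by (auto simp: late_approach_def)
  then show ?thesis
    by simp
next
  case True
  obtain u where u: "norm u = 1" "q - s = norm (q - s) *\<^sub>R u"
    by (rule obtain_unit_direction)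
  let ?box = "oriented_box s u (-2 * z) (2 * R) (2 * z)"
  have box: "?box \<in> sets lborel" "emeasure lborel ?box = ennreal ((2 * R + 2 * z) * (4 * z))"
    using sets_oriented_box[OF u(1)] emeasure_oriented_box[OF u(1)] assms
    by (auto simp: algebra_simps)
  have "emeasure (uniform_measure lborel (cball c R)) (Pair s -` late_approach c R q z)
          \<le> emeasure (uniform_measure lborel (cball c R)) ?box"
    using late_approach_section_subset[OF True u] box by (intro emeasure_mono) auto
  also have "\<dots> \<le> emeasure lborel ?box / emeasure lborel (cball c R)"
    using box by (intro emeasure_uniform_measure_le) auto
  also have "\<dots> = ennreal ((2 * R + 2 * z) * (4 * z)) / ennreal (pi * R^2)"
    using assms by (simp only: box(2) emeasure_lborel_cball_cart2 less_imp_le)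
  also have "\<dots> = ennreal ((2 * R + 2 * z) * (4 * z) / (pi * R^2))"
    using assms by (simp add: divide_ennreal)
  finally show ?thesis .
qed

lemma emeasure_pair_measure_le_sections:
  assumes "prob_space M" and "sigma_finite_measure N" and "B \<in> sets (M \<Otimes>\<^sub>M N)"
    and "\<And>x. emeasure N (Pair x -` B) \<le> k"
  shows "emeasure (M \<Otimes>\<^sub>M N) B \<le> k"
proof -
  have "emeasure (M \<Otimes>\<^sub>M N) B = (\<integral>\<^sup>+x. emeasure N (Pair x -` B) \<partial>M)"
    using assms(2,3) by (rule sigma_finite_measure.emeasure_pair_measure_alt)
  also have "\<dots> \<le> (\<integral>\<^sup>+x. k \<partial>M)"
    using assms(4) by (intro nn_integral_mono)
  also have "\<dots> = k"
    using prob_space.emeasure_space_1[OF assms(1)] by simp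
  finally show ?thesis .
qed

lemma emeasure_pair_measure_swap:
  assumes "sigma_finite_measure M" and "B \<in> sets (M \<Otimes>\<^sub>M M)"
  shows "emeasure (M \<Otimes>\<^sub>M M) ((\<lambda>(x, y). (y, x)) -` B \<inter> space (M \<Otimes>\<^sub>M M)) = emeasure (M \<Otimes>\<^sub>M M) B"
proof -
  interpret pair_sigma_finite M M
    using assms(1) by (simp add: pair_sigma_finite_def)
  show ?thesis
    using assms(2) by (subst (2) distr_pair_swap) (simp add: emeasure_distr measurable_pair_swap')
qed

lemma bounded_subset_cball_diameter:
  fixes Q :: "'a::metric_space set"
  assumes "bounded Q" and "diameter Q \<le> z"
  obtains q where "Q \<subseteq> cball q z"
proof (cases "Q = {}")
  case False
  then obtain q where "q \<in> Q"
    by blast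
  then have "Q \<subseteq> cball q z"
    using diameter_bounded_bound[OF assms(1) \<open>q \<in> Q\<close>] assms(2) by (force simp: subset_iff)
  then show ?thesis
    by (rule that)
qed (use that in blast)

lemma segment_meets_subset_late_approach:
  fixes c q :: "'a::real_normed_vector"
  assumes "Q \<subseteq> cball q z"
  shows "{(s, d). s \<in> cball c R \<and> d \<in> cball c R \<and> closed_segment s d \<inter> Q \<noteq> {}}
           \<subseteq> late_approach c R q z \<union> (\<lambda>(x, y). (y, x)) -` late_approach c R q z"
proof
  fix p assume "p \<in> {(s, d). s \<in> cball c R \<and> d \<in> cball c R \<and> closed_segment s d \<inter> Q \<noteq> {}}"
  then obtain s d x where p: "p = (s, d)" and s: "s \<in> cball c R" and d: "d \<in> cball c R"
    and x: "x \<in> closed_segment s d" "x \<in> Q"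
    by blast
  from x obtain t where t: "0 \<le> t" "t \<le> 1" and "x = (1 - t) *\<^sub>R s + t *\<^sub>R d"
    by (auto simp: closed_segment_def)
  moreover have "dist q x \<le> z"
    using assms x(2) by auto
  ultimately have near: "dist q ((1 - t) *\<^sub>R s + t *\<^sub>R d) \<le> z"
    and near': "dist q ((1 - (1 - t)) *\<^sub>R d + (1 - t) *\<^sub>R s) \<le> z"
    by (simp_all add: add.commute)
  show "p \<in> late_approach c R q z \<union> (\<lambda>(x, y). (y, x)) -` late_approach c R q z"
  proof (cases "1/2 \<le> t")
    case True
    then show ?thesis
      using p s d t near by (auto simp: late_approach_def)
  next
    case False
    then show ?thesis
      using p s d t near' by (auto simp: late_approach_def intro!: bexI[of _ "1 - t"])
  qed
qed

lemma two_boxes_over_disk_le: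
  assumes "0 < z" and "6 * z \<le> R"
  shows "2 * ((2 * R + 2 * z) * (4 * z) / (pi * R^2)) \<le> 6 * z / R"
proof -
  have "157 / 50 \<le> pi"
    by (rule order_trans[OF _ pi_approx(1)]) simp
  then have "157 / 50 * R \<le> pi * R"
    using assms by (intro mult_right_mono) auto
  then have "16 * R + 16 * z \<le> 6 * (pi * R)"
    using assms by linarith
  then have "(16 * R + 16 * z) * (z * R) \<le> 6 * (pi * R) * (z * R)"
    using assms by (intro mult_right_mono) auto
  then show ?thesis
    using assms pi_gt_zero by (simp add: field_simps power2_eq_square)
qed

lemma prob_space_uniform_measure_cball_cart2:
  fixes c :: "real^2"
  assumes "R > 0"
  shows "prob_space (uniform_measure lborel (cball c R))"
  using assms by (intro prob_space_uniform_measure) (simp_all add: emeasure_lborel_cball_cart2)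

lemma sets_unif_pair: "sets (unif_pair A) = sets borel"
proof -
  have "sets (unif_pair A) = sets ((lborel :: (real^2) measure) \<Otimes>\<^sub>M lborel)"
    unfolding unif_pair_def by (rule sets_pair_measure_cong) simp_all
  also have "(lborel :: (real^2) measure) \<Otimes>\<^sub>M lborel = lborel"
    by (rule lborel_prod)
  finally show ?thesis
    by simp
qed

lemma
  fixes c q :: "real^2"
  assumes "R > 0" and "z \<ge> 0"
  defines "B \<equiv> late_approach c R q z \<union> (\<lambda>(x, y). (y, x)) -` late_approach c R q z"
  shows sets_late_approach_both: "B \<in> sets (unif_pair (cball c R))"
    and emeasure_late_approach_both:
      "emeasure (unif_pair (cball c R)) B \<le> ennreal (2 * ((2 * R + 2 * z) * (4 * z) / (pi * R^2)))"
proof -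
  define M where "M = uniform_measure lborel (cball c R)"
  define k where "k = (2 * R + 2 * z) * (4 * z) / (pi * R^2)"
  have M: "prob_space M" "sigma_finite_measure M"
    using prob_space_uniform_measure_cball_cart2[OF assms(1)]
    by (simp_all add: M_def prob_space_imp_sigma_finite)
  have MM: "unif_pair (cball c R) = M \<Otimes>\<^sub>M M" and space: "space (M \<Otimes>\<^sub>M M) = UNIV"
    by (simp_all add: unif_pair_def M_def space_pair_measure)
  have L: "late_approach c R q z \<in> sets (M \<Otimes>\<^sub>M M)"
    using sets_unif_pair[of "cball c R"] compact_late_approach[of c R q z]
    by (simp add: MM compact_imp_closed)
  then have swap: "(\<lambda>(x, y). (y, x)) -` late_approach c R q z \<in> sets (M \<Otimes>\<^sub>M M)"
    using sets_pair_swap[OF L] by (simp add: space)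
  then show "B \<in> sets (unif_pair (cball c R))"
    using L by (simp add: B_def MM)
  have "emeasure (M \<Otimes>\<^sub>M M) (late_approach c R q z) \<le> k"
    using M L unfolding k_def
    by (rule emeasure_pair_measure_le_sections) (simp add: M_def emeasure_late_approach_section assms)
  moreover have "emeasure (M \<Otimes>\<^sub>M M) ((\<lambda>(x, y). (y, x)) -` late_approach c R q z) \<le> k"
    using emeasure_pair_measure_swap[OF M(2) L] calculation by (simp add: space)
  ultimately have "emeasure (M \<Otimes>\<^sub>M M) B \<le> ennreal k + ennreal k"
    unfolding B_def using emeasure_subadditive[OF L swap] add_mono order_trans by blast
  moreover have "k \<ge> 0"
    using assms by (simp add: k_def)
  ultimately show "emeasure (unif_pair (cball c R)) B \<le> ennreal (2 * k)"
    by (simp add: MM ennreal_plus[symmetric])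
qed

lemma measure_late_approach_both_le:
  fixes c q :: "real^2"
  assumes "R > 0" and "z > 0"
  shows "measure (unif_pair (cball c R))
           (late_approach c R q z \<union> (\<lambda>(x, y). (y, x)) -` late_approach c R q z) \<le> 6 * z / R"
    (is "measure _ ?B \<le> _")
proof (cases "6 * z \<le> R")
  case True
  have "measure (unif_pair (cball c R)) ?B \<le> 2 * ((2 * R + 2 * z) * (4 * z) / (pi * R^2))"
    using emeasure_late_approach_both[of R z c q] assms unfolding measure_def
    by (intro enn2real_leI) auto
  also have "\<dots> \<le> 6 * z / R"
    using assms(2) True by (rule two_boxes_over_disk_le)
  finally show ?thesis .
next
  case False
  have "prob_space (unif_pair (cball c R))"
    unfolding unif_pair_def using prob_space_uniform_measure_cball_cart2[OF assms(1)]
    by (intro prob_space_pair)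
  then have "measure (unif_pair (cball c R)) ?B \<le> 1"
    by (rule prob_space.prob_le_1)
  moreover have "1 \<le> 6 * z / R"
    using False assms(1) by (simp add: divide_simps)
  ultimately show ?thesis
    by linarith
qed

theorem lemmaC2:
  fixes n \<gamma> z :: real and c :: "real^2" and A Q :: "(real^2) set"
    and P :: "(real^2) set set"
  assumes "n \<ge> 1" and "\<gamma> \<ge> 0"
    and "A = cball c (n powr \<gamma>)"
    and "z > 0" and "z \<le> n powr \<gamma>"
    and "\<Union>P = A" and "disjoint P"
    and "\<forall>C\<in>P. convex C \<and> diameter C \<le> z"
    and "Q \<in> P"
  shows "\<exists>B \<in> sets (unif_pair A).
           {(s, d). s \<in> A \<and> d \<in> A \<and> closed_segment s d \<inter> Q \<noteq> {}} \<subseteq> B \<and>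
           measure (unif_pair A) B \<le> 6 * z / n powr \<gamma>"
proof -
  define R where "R = n powr \<gamma>"
  have R: "R > 0" "A = cball c R"
    using assms(3-5) unfolding R_def by linarith+
  have "bounded Q" "diameter Q \<le> z"
    using assms(6,8,9) R(2) by (auto intro: bounded_subset[OF bounded_cball])
  then obtain q where "Q \<subseteq> cball q z"
    by (rule bounded_subset_cball_diameter)
  then show ?thesis
    using segment_meets_subset_late_approach[of Q q z c R]
      sets_late_approach_both[of R z c q] measure_late_approach_both_le[of R z c q] R assms(4)
    unfolding R_def by (intro bexI) auto
qed

end
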